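(* (Copy.) There exists an $n$-RASP-L program with $T(n)=n$ that solves the $n$-symbol copy task: for every $n\ge 1$, every $n'\ge n-1$ and every binary sequence $x_1,\dots,x_n\in\{0,1\}$, the program maps the input sequence $$x_1\,\dots\,x_n\;\texttt{>}\;\underbrace{\texttt{\#}\,\dots\,\texttt{\#}}_{n'}$$ (of length $n+1+n'$) to an output sequence of the same length of the form $$\underbrace{*\,\dots\,*}_{n}\;x_1\,\dots\,x_n\;\underbrace{\texttt{\#}\,\dots\,\texttt{\#}}_{n'-n+1}.$$
   Context: Tokens: $\texttt{>}$ is a special end-of-query (EOQ) token, $\texttt{\#}$ is a special end-of-sequence (EOS) token, and $*$ in the output denotes a position whose value is ignored (any value is allowed there). RASP-L is a restricted programming language modelling decoder-only (causal) Transformers. A RASP-L program takes an integer-token sequence of arbitrary length and returns a sequence of the same length. It is straight-line code (no branching, no loops), each line being a call to a core primitive or to another RASP-L program. Core primitives: $\mathrm{indices}(x)$ (the sequence $0,1,\dots,|x|-1$); $\mathrm{full}(x,c)$ (constant sequence); elementwise maps applying a fixed function to the tokens at each position of one or more sequences; and the causal attention operation $\mathrm{kqv}(k,q,v,\mathrm{pred},\mathrm{default})$, whose output at position $i$ is the (integer-truncated) mean of $v_j$ over all $j\le i$ with $\mathrm{pred}(k_j,q_i)$ true, or $\mathrm{default}$ if no such $j$ exists. Operations on token indices are restricted to order comparisons and successor/predecessor (e.g. $\mathrm{indices}(x)+1$); arbitrary index arithmetic is not allowed. For example, shifting a sequence right by one position is $\mathrm{kqv}(\mathrm{indices}(x)+1,\mathrm{indices}(x),x,=,0)$.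 An $n$-RASP-L program is a program $P$ for which there exist a function $T:\mathbb{N}\to\mathbb{N}$ and a RASP-L program $P'$ such that, on inputs of problem size $n$, $P$ consists of the sequential application of $P'$ for $T(n)$ steps (the paper allows fixed RASP-L pre-processing and post-processing steps, e.g. handling EOS/EOQ tokens, outside this loop). *)

theory Defs
  imports Main
begin

text \<open>Bits are the integers 0 and 1; the special end-of-query token and the
end-of-sequence token are encoded by the integers 2 and 3.\<close>

definition eoq :: int where "eoq = 2"
definition eos :: int where "eos = 3"

text \<open>Variable 0 is the input sequence;
the k-th instruction (k starting at 0) defines variable k+1 and may refer only
to variables 0..k.  Calls to other
RASP-L programs are represented by inlining (straight-line code).\<close>

datatype instr =
    Idx nat
  | Full nat int
  | Succ nat
  | Pred nat
  | MapN "int list \<Rightarrow> int" "nat list"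
  | KQV nat nat nat "int \<Rightarrow> int \<Rightarrow> bool" int

text \<open>Index-derived
sequences may only be shifted by successor/predecessor and compared via order
comparisons inside kqv; they can never be fed to maps or used as values.\<close>

datatype sort = TokS | IdxS

definition order_preds :: "(int \<Rightarrow> int \<Rightarrow> bool) set" where
  "order_preds = {(\<lambda>a b. a = b), (\<lambda>a b. a \<noteq> b), (\<lambda>a b. a < b),
                  (\<lambda>a b. a \<le> b), (\<lambda>a b. a > b), (\<lambda>a b. a \<ge> b)}"

fun instr_sort :: "sort list \<Rightarrow> instr \<Rightarrow> sort option" where
  "instr_sort ss (Idx i) = (if i < length ss then Some IdxS else None)"
| "instr_sort ss (Full i c) = (if i < length ss then Some TokS else None)"
| "instr_sort ss (Succ i) = (if i < length ss \<and> ss ! i = IdxS then Some IdxS else None)"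
| "instr_sort ss (Pred i) = (if i < length ss \<and> ss ! i = IdxS then Some IdxS else None)"
| "instr_sort ss (MapN f is) =
     (if is \<noteq> [] \<and> (\<forall>i\<in>set is. i < length ss \<and> ss ! i = TokS) then Some TokS else None)"
| "instr_sort ss (KQV k q v p d) =
     (if k < length ss \<and> q < length ss \<and> v < length ss \<and> ss ! v = TokS \<and>
         ((ss ! k = IdxS \<or> ss ! q = IdxS) \<longrightarrow> p \<in> order_preds)
      then Some TokS else None)"

fun wf_from :: "sort list \<Rightarrow> instr list \<Rightarrow> bool" where
  "wf_from ss [] = (last ss = TokS)"
| "wf_from ss (c # cs) =
     (case instr_sort ss c of None \<Rightarrow> False | Some s \<Rightarrow> wf_from (ss @ [s]) cs)"

definition rasp_l :: "instr list \<Rightarrow> bool" where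
  "rasp_l P \<longleftrightarrow> wf_from [TokS] P"

definition trunc_div :: "int \<Rightarrow> int \<Rightarrow> int" where
  "trunc_div a b = (if a \<ge> 0 then a div b else - ((- a) div b))"

fun exec_instr :: "int list list \<Rightarrow> instr \<Rightarrow> int list" where
  "exec_instr env (Idx i) = map int [0..<length (env ! i)]"
| "exec_instr env (Full i c) = replicate (length (env ! i)) c"
| "exec_instr env (Succ i) = map (\<lambda>a. a + 1) (env ! i)"
| "exec_instr env (Pred i) = map (\<lambda>a. a - 1) (env ! i)"
| "exec_instr env (MapN f is) =
     map (\<lambda>j. f (map (\<lambda>i. env ! i ! j) is)) [0..<length (env ! hd is)]"
| "exec_instr env (KQV k q v p d) =
     map (\<lambda>i. let S = {j. j \<le> i \<and> p (env ! k ! j) (env ! q ! i)} in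
               if S = {} then d else trunc_div (\<Sum>j\<in>S. env ! v ! j) (int (card S)))
         [0..<length (env ! q)]"

definition run :: "instr list \<Rightarrow> int list \<Rightarrow> int list" where
  "run P x = last (fold (\<lambda>c env. env @ [exec_instr env c]) P [x])"

end

theory Submission
  imports Defs
begin

text \<open>The step program shifts the whole sequence one position to the right: an attention
head whose keys are the successors of the indices makes position i attend exactly to
position i - 1.  After n steps the input x_1 ... x_n > # ... # has moved n positions, so
the bits now sit right behind the query, followed by the shifted end-of-query token and
end-of-sequence tokens.  A final elementwise map turns that end-of-query token into an
end-of-sequence token and leaves the bits unchanged.\<close>

lemma run_Nil [simp]: "run [] x = x"
  by (simp add: run_def)

lemma rasp_l_Nil: "rasp_l []"
  by (simp add: rasp_l_def)

lemma take_Cons_take: "take n (a # take n zs) = take n (a # zs)"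
  by (cases n) simp_all

definition shift_right :: "instr list" where
  "shift_right = [Idx 0, Succ 1, KQV 2 1 0 (\<lambda>a b. a = b) 0]"

lemma rasp_l_shift_right: "rasp_l shift_right"
  by (simp add: rasp_l_def shift_right_def order_preds_def)

lemma shift_right_attention_set:
  "i < L \<Longrightarrow> {j. j \<le> i \<and> map ((\<lambda>a. a + 1) \<circ> int) [0..<L] ! j = int i}
    = (if i = 0 then {} else {i - 1})"
  by auto

lemma run_shift_right: "run shift_right ys = take (length ys) (0 # ys)"
proof (rule nth_equalityI)
  show "length (run shift_right ys) = length (take (length ys) (0 # ys))"
    by (simp add: run_def shift_right_def)
  fix i assume "i < length (run shift_right ys)"
  then have "i < length ys"
    by (simp add: run_def shift_right_def)
  then show "run shift_right ys ! i = take (length ys) (0 # ys) ! i"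
    by (simp add: run_def shift_right_def shift_right_attention_set trunc_div_def nth_Cons' Let_def
        del: upt_Suc Collect_empty_eq)
qed

lemma funpow_run_shift_right:
  "(run shift_right ^^ k) ys = take (length ys) (replicate k 0 @ ys)"
proof (induction k)
  case 0
  show ?case by simp
next
  case (Suc k)
  have "(run shift_right ^^ Suc k) ys = take (length ys) (0 # take (length ys) (replicate k 0 @ ys))"
    by (simp only: funpow.simps(2) o_apply Suc.IH run_shift_right length_take) simp
  then show ?case
    by (simp only: take_Cons_take) simp
qed

definition map_tokens :: "(int \<Rightarrow> int) \<Rightarrow> instr list" where
  "map_tokens f = [MapN (\<lambda>l. f (hd l)) [0]]"

lemma rasp_l_map_tokens: "rasp_l (map_tokens f)"
  by (simp add: rasp_l_def map_tokens_def)

lemma run_map_tokens: "run (map_tokens f) ys = map f ys"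
  by (rule nth_equalityI) (simp_all add: run_def map_tokens_def)

definition eoq_to_eos :: "int \<Rightarrow> int" where
  "eoq_to_eos a = (if a = eoq then eos else a)"

lemma map_eoq_to_eos_bits: "set xs \<subseteq> {0, 1} \<Longrightarrow> map eoq_to_eos xs = xs"
  by (induction xs) (auto simp: eoq_to_eos_def eoq_def)

theorem proposition2:
  shows "\<exists>pre step post.
     rasp_l pre \<and> rasp_l step \<and> rasp_l post \<and>
     (\<forall>(n::nat) (n'::nat) (xs::int list).
        n \<ge> 1 \<longrightarrow> n' + 1 \<ge> n \<longrightarrow> length xs = n \<longrightarrow> set xs \<subseteq> {0, 1} \<longrightarrow>
        (let out = run post ((run step ^^ n) (run pre (xs @ [eoq] @ replicate n' eos)))
         in length out = n + 1 + n' \<and> drop n out = xs @ replicate (n' + 1 - n) eos))"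
proof (intro exI conjI allI impI)
  fix n n' :: nat and xs :: "int list"
  assume "n' + 1 \<ge> n" and xs: "length xs = n" "set xs \<subseteq> {0, 1}"
  let ?input = "xs @ [eoq] @ replicate n' eos"
  let ?out = "run (map_tokens eoq_to_eos) ((run shift_right ^^ n) (run [] ?input))"
  have out: "?out = map eoq_to_eos (take (n + 1 + n') (replicate n 0 @ ?input))"
    using xs(1) by (simp add: funpow_run_shift_right run_map_tokens)
  have "drop n ?out = map eoq_to_eos (xs @ take (n' + 1 - n) (eoq # replicate n' eos))"
    unfolding out using xs(1) \<open>n' + 1 \<ge> n\<close> by (simp add: drop_map)
  also have "\<dots> = xs @ map eoq_to_eos (take (n' + 1 - n) (eoq # replicate n' eos))"
    using xs(2) by (simp add: map_eoq_to_eos_bits)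
  also have "\<dots> = xs @ replicate (n' + 1 - n) eos"
    by (cases "n' + 1 - n") (simp_all add: eoq_to_eos_def eos_def eoq_def)
  finally show "let out = ?out in length out = n + 1 + n' \<and> drop n out = xs @ replicate (n' + 1 - n) eos"
    unfolding out Let_def using xs(1) \<open>n' + 1 \<ge> n\<close> by simp
qed (simp_all add: rasp_l_Nil rasp_l_shift_right rasp_l_map_tokens)

end
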